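(* Let $d\ge2$ and $n\ge2$ be integers and $R\ge1$. There exists an $(R+1)$-fat cake $C\subseteq\mathbb{R}^d$ such that for every real $m'$ with $1\le m'\le (n-1)^{1/d}$, letting $S_{m'}$ be the family of $m'R$-fat Borel subsets of $\mathbb{R}^d$, $$\mathrm{PropEF}(C,n,S_{m'})\le\mathrm{Prop}(C,n,S_{m'})<\frac1n.$$
   Context: For $R\ge1$, a $d$-dimensional piece (Borel subset of $\mathbb{R}^d$) is $R$-fat if it contains a $d$-dimensional cube $B^-$ and is contained in a $d$-dimensional cube $B^+$ parallel to $B^-$ with $\mathrm{len}(B^+)/\mathrm{len}(B^-)\le R$ (len = side length). A value measure on $C$ is $V(X)=\int_X v$ with $v$ non-negative, bounded, integrable on $C$, $V(C)<\infty$; $V^S(X):=\sup\{V(s):s\in S,s\subseteq X\}$. For $n$ agents with value measures $V_1,\dots,V_n$, an $S$-allocation is $(X_1,\dots,X_n)$ with $X_i\in S$ pairwise disjoint and $\bigcup_i X_i\subseteq C$; it is envy-free if $V_i^S(X_i)\ge V_i^S(X_j)$ for all $i,j$. $\mathrm{Prop}(C,n,S):=\inf_{V_1,\dots,V_n}\sup_X\min_i V_i(X_i)/V_i(C)$, the infimum over all $n$-tuples of value measures on $C$ and the supremum over all $S$-allocations; $\mathrm{PropEF}(C,n,S)$ is the same with the supremum over envy-free $S$-allocations only. *)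

theory Defs
  imports "HOL-Analysis.Analysis"
begin

definition cube :: "((real^'d) \<Rightarrow> (real^'d)) \<Rightarrow> real^'d \<Rightarrow> real \<Rightarrow> (real^'d) set" where
  "cube Q a l = (\<lambda>x. a + Q x) ` cbox 0 (l *\<^sub>R One)"

definition fat :: "real \<Rightarrow> (real^'d) set \<Rightarrow> bool" where
  "fat R X \<longleftrightarrow> (\<exists>Q a l b L. orthogonal_transformation Q \<and> 0 < l \<and> 0 < L \<and>
      cube Q a l \<subseteq> X \<and> X \<subseteq> cube Q b L \<and> L / l \<le> R)"

definition fat_pieces :: "real \<Rightarrow> (real^'d) set set" where
  "fat_pieces R = {X. X \<in> sets borel \<and> fat R X}"

definition value_density :: "(real^'d) set \<Rightarrow> ((real^'d) \<Rightarrow> real) \<Rightarrow> bool" where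
  "value_density C v \<longleftrightarrow> (\<forall>x\<in>C. 0 \<le> v x) \<and> (\<exists>B. \<forall>x\<in>C. v x \<le> B) \<and>
      set_integrable lebesgue C v \<and> 0 < (LINT x:C|lebesgue. v x)"

definition valm :: "((real^'d) \<Rightarrow> real) \<Rightarrow> (real^'d) set \<Rightarrow> real" where
  "valm v X = (LINT x:X|lebesgue. v x)"

definition valS :: "(real^'d) set set \<Rightarrow> ((real^'d) \<Rightarrow> real) \<Rightarrow> (real^'d) set \<Rightarrow> ereal" where
  "valS S v X = Sup {ereal (valm v s) | s. s \<in> S \<and> s \<subseteq> X}"

definition allocation :: "(real^'d) set \<Rightarrow> nat \<Rightarrow> (real^'d) set set \<Rightarrow> (nat \<Rightarrow> (real^'d) set) \<Rightarrow> bool" where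
  "allocation C n S X \<longleftrightarrow> (\<forall>i<n. X i \<in> S) \<and> (\<forall>i<n. \<forall>j<n. i \<noteq> j \<longrightarrow> X i \<inter> X j = {}) \<and>
      (\<Union>i<n. X i) \<subseteq> C"

definition envy_free :: "nat \<Rightarrow> (real^'d) set set \<Rightarrow> (nat \<Rightarrow> (real^'d) \<Rightarrow> real) \<Rightarrow> (nat \<Rightarrow> (real^'d) set) \<Rightarrow> bool" where
  "envy_free n S v X \<longleftrightarrow> (\<forall>i<n. \<forall>j<n. valS S (v i) (X j) \<le> valS S (v i) (X i))"

definition prop_ratio :: "(real^'d) set \<Rightarrow> nat \<Rightarrow> (nat \<Rightarrow> (real^'d) \<Rightarrow> real) \<Rightarrow> (nat \<Rightarrow> (real^'d) set) \<Rightarrow> real" where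
  "prop_ratio C n v X = Min ((\<lambda>i. valm (v i) (X i) / valm (v i) C) ` {..<n})"

definition Prop :: "(real^'d) set \<Rightarrow> nat \<Rightarrow> (real^'d) set set \<Rightarrow> ereal" where
  "Prop C n S = Inf {Sup {ereal (prop_ratio C n v X) | X. allocation C n S X}
                     | v. \<forall>i<n. value_density C (v i)}"

definition PropEF :: "(real^'d) set \<Rightarrow> nat \<Rightarrow> (real^'d) set set \<Rightarrow> ereal" where
  "PropEF C n S = Inf {Sup {ereal (prop_ratio C n v X) | X. allocation C n S X \<and> envy_free n S v X}
                     | v. \<forall>i<n. value_density C (v i)}"

end

theory Submission
  imports Defs
begin

text \<open>
  The cake is the unit cube \<open>[0,1]\<^sup>d\<close> together with a tiny cube of side \<open>e\<close> in the
  opposite corner of \<open>[0,R+1]\<^sup>d\<close>, and every agent values it uniformly. Take any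
  allocation into \<open>M\<close>-fat pieces, \<open>M = m'R\<close>. If a piece lies in the tiny cube it is worth
  at most \<open>e\<^sup>d\<close>; if all pieces lie in the unit cube, one of them has volume at most \<open>1/n\<close>.
  Otherwise some piece touches both cubes, so it spans at least \<open>R - e\<close> in every coordinate;
  its outer cube has side at least \<open>R - e\<close> and by fatness its inner cube has side at least
  \<open>(R - e)/M\<close>. Since \<open>M\<^sup>d \<le> (n - 1) R\<^sup>d\<close>, this piece takes more than a fair share,
  and one of the remaining \<open>n - 1\<close> pieces gets less. With \<open>e = 1/(2nd)\<close> all three
  bounds are uniformly below \<open>1/n\<close> of the total value \<open>1 + e\<^sup>d\<close>.
\<close>

section \<open>Lebesgue measure of rotated cubes\<close>

text \<open>
  Invariance of Lebesgue measure under orthogonal maps is available (theory Change_Of_Vars)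
  only for \<open>real^'n\<close> with a well-ordered index type. We transfer it to an arbitrary finite
  index type \<open>'d\<close> through an isomorphic copy of \<open>'d\<close>, ordered via \<open>to_nat\<close>.
\<close>

typedef 'a ranked = "UNIV :: 'a set" by simp

instance ranked :: (finite) finite
  by standard (metis type_definition.univ[OF type_definition_ranked] finite finite_imageI)

instantiation ranked :: (finite) wellorder
begin

definition less_eq_ranked :: "'a ranked \<Rightarrow> 'a ranked \<Rightarrow> bool" where
  "x \<le> y \<longleftrightarrow> to_nat (Rep_ranked x) \<le> to_nat (Rep_ranked y)"

definition less_ranked :: "'a ranked \<Rightarrow> 'a ranked \<Rightarrow> bool" where
  "x < y \<longleftrightarrow> to_nat (Rep_ranked x) < to_nat (Rep_ranked y)"

instance
proof
  fix P :: "'a ranked \<Rightarrow> bool" and a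
  assume step: "\<And>x. (\<And>y. y < x \<Longrightarrow> P y) \<Longrightarrow> P x"
  have "P x" if "to_nat (Rep_ranked x) = k" for k x
    using that by (induction k arbitrary: x rule: less_induct) (metis less_ranked_def step)
  then show "P a" by blast
qed (auto simp: less_eq_ranked_def less_ranked_def Rep_ranked_inject)

end

text \<open>The simplifier rewrites \<open>One $ i\<close> into the left-hand side below.\<close>

lemma sum_Basis_nth [simp]: "(\<Sum>x\<in>(Basis :: (real^'n::finite) set). x $ i) = 1"
proof -
  have "(1 :: real^'n) $ i = 1"
    by simp
  then show ?thesis
    by (simp add: Cart_1 sum_component)
qed

definition relabel :: "real^'d \<Rightarrow> real^'d ranked" where
  "relabel x = (\<chi> j. x $ Rep_ranked j)"

definition unrelabel :: "real^'d ranked \<Rightarrow> real^'d" where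
  "unrelabel y = (\<chi> i. y $ Abs_ranked i)"

lemma unrelabel_relabel [simp]: "unrelabel (relabel x) = x"
  by (simp add: relabel_def unrelabel_def Abs_ranked_inverse vec_eq_iff)

lemma relabel_unrelabel [simp]: "relabel (unrelabel y) = y"
  by (simp add: relabel_def unrelabel_def Rep_ranked_inverse vec_eq_iff)

lemma bij_Rep_ranked: "bij Rep_ranked"
  by (metis bij_betw_def inj_on_def type_definition.Rep_range[OF type_definition_ranked] Rep_ranked_inject)

lemma Rep_Abs_ranked [simp]: "Rep_ranked (Abs_ranked i) = i"
  by (simp add: Abs_ranked_inverse)

lemma linear_relabel: "linear relabel"
  by (auto simp: linear_iff relabel_def vec_eq_iff)

lemma linear_unrelabel: "linear unrelabel"
  by (auto simp: linear_iff unrelabel_def vec_eq_iff)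

lemma norm_relabel: "norm (relabel x) = norm x"
  using sum.reindex_bij_betw[OF bij_Rep_ranked, of "\<lambda>i. (x $ i)\<^sup>2"]
  by (simp add: norm_vec_def L2_set_def relabel_def)

lemma norm_unrelabel: "norm (unrelabel y) = norm y"
  by (metis norm_relabel relabel_unrelabel)

lemma relabel_zero [simp]: "relabel 0 = 0"
  by (simp add: relabel_def vec_eq_iff)

lemma relabel_scaleR_One [simp]: "relabel (c *\<^sub>R One) = c *\<^sub>R One"
  by (simp add: relabel_def vec_eq_iff)

lemma relabel_image_cbox: "relabel ` cbox a b = cbox (relabel a) (relabel b)"
proof
  show "relabel ` cbox a b \<subseteq> cbox (relabel a) (relabel b)"
    by (auto simp: mem_box_cart relabel_def)
  show "cbox (relabel a) (relabel b) \<subseteq> relabel ` cbox a b"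
  proof
    fix y assume y: "y \<in> cbox (relabel a) (relabel b)"
    have "a $ i \<le> unrelabel y $ i \<and> unrelabel y $ i \<le> b $ i" for i
      using y unfolding mem_box_cart by (simp add: relabel_def unrelabel_def) (metis Rep_Abs_ranked)
    then have "unrelabel y \<in> cbox a b"
      by (simp add: mem_box_cart)
    then show "y \<in> relabel ` cbox a b"
      by (metis image_eqI relabel_unrelabel)
  qed
qed

lemma unrelabel_image_cbox: "unrelabel ` cbox a b = cbox (unrelabel a) (unrelabel b)"
proof -
  have "cbox a b = relabel ` cbox (unrelabel a) (unrelabel b)"
    by (simp add: relabel_image_cbox)
  then show ?thesis
    by (simp add: image_image)
qed

lemma content_relabel_image_cbox:
  "Henstock_Kurzweil_Integration.content (relabel ` cbox a b) = Henstock_Kurzweil_Integration.content (cbox a b)"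
proof -
  have "cbox (relabel a) (relabel b) = {} \<longleftrightarrow> cbox a b = {}"
    by (metis image_is_empty relabel_image_cbox)
  moreover have "(\<Prod>j\<in>UNIV. b $ Rep_ranked j - a $ Rep_ranked j) = (\<Prod>i\<in>UNIV. b $ i - a $ i)"
    using prod.reindex_bij_betw[OF bij_Rep_ranked, of "\<lambda>i. b $ i - a $ i"] by simp
  ultimately show ?thesis
    unfolding relabel_image_cbox content_cbox_if_cart by (simp add: relabel_def)
qed

lemma has_integral_indicator_UNIV_iff:
  fixes S T :: "'a::euclidean_space set"
  assumes "S \<subseteq> T"
  shows "(indicat_real S has_integral m) T \<longleftrightarrow> (indicat_real S has_integral m) UNIV"
proof -
  have "(\<lambda>x. if x \<in> T then indicat_real S x else 0) = indicat_real S"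
    using assms by (auto simp: indicator_def fun_eq_iff)
  then show ?thesis
    using has_integral_restrict_UNIV[of T "indicat_real S" m] by simp
qed

lemma lmeasurable_unrelabel_image:
  fixes S :: "(real^'d::finite ranked) set"
  assumes S: "S \<in> lmeasurable" and "bounded S"
  shows "unrelabel ` S \<in> lmeasurable \<and> measure lebesgue (unrelabel ` S) = measure lebesgue S"
proof -
  obtain b where S_sub: "S \<subseteq> cbox (- b) b"
    using \<open>bounded S\<close> bounded_subset_cbox_symmetric by blast
  have "(indicator S has_integral measure lebesgue S) (cbox (- b) b)"
    using has_integral_indicator_UNIV_iff[OF S_sub] lmeasurable_iff_has_integral[THEN iffD1, OF S] by blast
  moreover have "continuous (at x) relabel" for x :: "real^'d"
    using linear_continuous_at linear_relabel[unfolded linear_conv_bounded_linear] by blast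
  moreover have "\<exists>w z. relabel ` cbox u v = cbox w z" for u v :: "real^'d"
    using relabel_image_cbox by blast
  moreover have "\<exists>w z. unrelabel ` cbox u v = cbox w z" for u v :: "real^'d ranked"
    using unrelabel_image_cbox by blast
  moreover have "Henstock_Kurzweil_Integration.content (relabel ` cbox u v) =
      1 * Henstock_Kurzweil_Integration.content (cbox u v)" for u v :: "real^'d"
    using content_relabel_image_cbox by simp
  ultimately have "((\<lambda>x. indicator S (relabel x)) has_integral (1 / 1) *\<^sub>R measure lebesgue S)
      (unrelabel ` cbox (- b) b)"
    by (intro has_integral_twiddle[OF zero_less_one unrelabel_relabel relabel_unrelabel])
  moreover have "(\<lambda>x. indicator S (relabel x)) = indicat_real (unrelabel ` S)"
  proof
    fix x
    have "relabel x \<in> S \<longleftrightarrow> x \<in> unrelabel ` S"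
      by (auto intro: image_eqI[where x = "relabel x"])
    then show "indicator S (relabel x) = indicat_real (unrelabel ` S) x"
      by (simp add: indicator_def)
  qed
  ultimately have "(indicat_real (unrelabel ` S) has_integral measure lebesgue S) (unrelabel ` cbox (- b) b)"
    by (simp only: div_by_1 scaleR_one)
  then have "(indicat_real (unrelabel ` S) has_integral measure lebesgue S) UNIV"
    by (rule has_integral_indicator_UNIV_iff[THEN iffD1, OF image_mono[OF S_sub]])
  from lmeasurable_iff_indicator_has_integral[THEN iffD2, OF this] show ?thesis
    by simp
qed

lemma measure_cbox_scaleR_One:
  assumes "a \<le> b"
  shows "measure lebesgue (cbox (a *\<^sub>R One) (b *\<^sub>R One :: real^'n::finite)) = (b - a) ^ CARD('n)"
  using assms by (simp add: content_cbox_if_cart interval_eq_empty_cart)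

lemma measure_cube:
  fixes Q :: "real^'d::finite \<Rightarrow> real^'d"
  assumes Q: "orthogonal_transformation Q" and "0 \<le> l"
  shows "cube Q a l \<in> lmeasurable \<and> measure lebesgue (cube Q a l) = l ^ CARD('d)"
proof -
  define B where "B = relabel ` cbox 0 (l *\<^sub>R One :: real^'d)"
  define Q' where "Q' = relabel \<circ> Q \<circ> unrelabel"
  have B_cbox: "B = cbox 0 (l *\<^sub>R One)"
    by (simp add: B_def relabel_image_cbox)
  then have B: "B \<in> lmeasurable" "bounded B"
    by auto
  have "measure lebesgue B = Henstock_Kurzweil_Integration.content B"
    by (simp add: B_cbox)
  also have "\<dots> = Henstock_Kurzweil_Integration.content (cbox 0 (l *\<^sub>R One :: real^'d))"
    unfolding B_def by (rule content_relabel_image_cbox)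
  also have "\<dots> = l ^ CARD('d)"
    using measure_cbox_scaleR_One[of 0 l] \<open>0 \<le> l\<close> by simp
  finally have "measure lebesgue B = l ^ CARD('d)" .
  have "linear Q'"
    using Q linear_relabel
    by (auto simp: Q'_def orthogonal_transformation_linear intro!: linear_compose linear_unrelabel)
  then have Q': "orthogonal_transformation Q'"
    by (simp add: orthogonal_transformation Q'_def norm_relabel norm_unrelabel orthogonal_transformation_norm[OF Q])
  have "bounded (Q' ` B)"
    using B(2) \<open>linear Q'\<close> by (simp add: bounded_linear_image linear_conv_bounded_linear)
  moreover have "unrelabel ` Q' ` B = Q ` cbox 0 (l *\<^sub>R One)"
    by (simp add: Q'_def B_def image_image)
  ultimately have "Q ` cbox 0 (l *\<^sub>R One) \<in> lmeasurable \<and> measure lebesgue (Q ` cbox 0 (l *\<^sub>R One)) = l ^ CARD('d)"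
    using lmeasurable_unrelabel_image[of "Q' ` B"] measurable_orthogonal_image[OF Q' B(1)]
      measure_orthogonal_image[OF Q' B(1)] \<open>measure lebesgue B = l ^ CARD('d)\<close>
    by simp
  moreover have "cube Q a l = (+) a ` Q ` cbox 0 (l *\<^sub>R One)"
    by (simp add: cube_def image_image)
  ultimately show ?thesis
    by (simp add: measurable_translation measure_translation)
qed

section \<open>Fat pieces\<close>

lemma cube_side_ge_coordinate_gap:
  fixes x y :: "real^'d::finite"
  assumes Q: "orthogonal_transformation Q" and x: "x \<in> cube Q b L" and y: "y \<in> cube Q b L"
    and "0 \<le> s" and gap: "\<And>i. s \<le> \<bar>y $ i - x $ i\<bar>"
  shows "s \<le> L"
proof -
  obtain u w where u: "u \<in> cbox 0 (L *\<^sub>R One)" "x = b + Q u" and w: "w \<in> cbox 0 (L *\<^sub>R One)" "y = b + Q w"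
    using x y unfolding cube_def by blast
  have u_w: "0 \<le> u $ i" "u $ i \<le> L" "0 \<le> w $ i" "w $ i \<le> L" for i
    using u(1) w(1) by (simp_all add: mem_box_cart)
  then have "0 \<le> L"
    by (meson order_trans)
  have "(One :: real^'d) $ undefined = 1"
    by simp
  then have "(One :: real^'d) \<noteq> 0"
    by (metis zero_index zero_neq_one)
  have "s * norm (One :: real^'d) = norm (s *\<^sub>R (One :: real^'d))"
    using \<open>0 \<le> s\<close> by simp
  also have "\<dots> \<le> norm (y - x)"
    using \<open>0 \<le> s\<close> gap by (intro norm_le_componentwise_cart) simp
  also have "\<dots> = norm (w - u)"
    using Q by (simp add: u(2) w(2) orthogonal_transformation_norm
        flip: linear_diff[OF orthogonal_transformation_linear[OF Q]])
  also have "\<dots> \<le> norm (L *\<^sub>R (One :: real^'d))"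
  proof (intro norm_le_componentwise_cart)
    show "norm ((w - u) $ i) \<le> norm ((L *\<^sub>R (One :: real^'d)) $ i)" for i
    proof -
      have "\<bar>w $ i - u $ i\<bar> \<le> L"
        using u_w[of i] by arith
      then show ?thesis
        using \<open>0 \<le> L\<close> by simp
    qed
  qed
  also have "\<dots> = L * norm (One :: real^'d)"
    using \<open>0 \<le> L\<close> by simp
  finally show ?thesis
    using \<open>(One :: real^'d) \<noteq> 0\<close> by simp
qed

lemma fat_measure_ge:
  fixes X :: "(real^'d::finite) set"
  assumes fat: "fat M X" and X: "X \<in> lmeasurable" and "x \<in> X" "y \<in> X"
    and "0 \<le> s" and gap: "\<And>i. s \<le> \<bar>y $ i - x $ i\<bar>"
  shows "(s / M) ^ CARD('d) \<le> measure lebesgue X"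
proof -
  obtain Q a l b L where Q: "orthogonal_transformation Q" and "0 < l" "0 < L"
    and inner: "cube Q a l \<subseteq> X" and outer: "X \<subseteq> cube Q b L" and ratio: "L / l \<le> M"
    using fat unfolding fat_def by blast
  have "s \<le> L"
    using cube_side_ge_coordinate_gap[OF Q] outer \<open>x \<in> X\<close> \<open>y \<in> X\<close> \<open>0 \<le> s\<close> gap by blast
  moreover have "0 < M" "L \<le> M * l"
    using ratio \<open>0 < l\<close> \<open>0 < L\<close> by (auto simp: divide_le_eq intro: less_le_trans[OF divide_pos_pos])
  ultimately have "s / M \<le> l"
    by (simp add: divide_le_eq mult.commute)
  have cube: "cube Q a l \<in> lmeasurable"
    using measure_cube[OF Q, of l a] \<open>0 < l\<close> by simp
  from \<open>s / M \<le> l\<close> have "(s / M) ^ CARD('d) \<le> l ^ CARD('d)"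
    using \<open>0 \<le> s\<close> \<open>0 < M\<close> by (simp add: power_mono)
  also have "\<dots> = measure lebesgue (cube Q a l)"
    using measure_cube[OF Q, of l a] \<open>0 < l\<close> by simp
  also have "\<dots> \<le> measure lebesgue X"
    using measure_mono_fmeasurable[OF inner fmeasurableD[OF cube] X] .
  finally show ?thesis .
qed

section \<open>Allocations and proportionality\<close>

lemma exists_le_average:
  fixes f :: "'a \<Rightarrow> real"
  assumes "finite I" "I \<noteq> {}" "sum f I \<le> S"
  shows "\<exists>i\<in>I. f i \<le> S / card I"
proof (rule ccontr)
  assume "\<not> ?thesis"
  then have "(\<Sum>i\<in>I. S / card I) < sum f I"
    using assms by (intro sum_strict_mono) auto
  then show False
    using assms by simp
qed

lemma exists_le_average_of_large_term:
  fixes f :: "nat \<Rightarrow> real"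
  assumes sum: "(\<Sum>i<n. f i) \<le> T" and "j < n" "c \<le> f j" "2 \<le> n"
  shows "\<exists>i<n. f i \<le> (T - c) / (real n - 1)"
proof -
  let ?others = "{..<n} - {j}"
  have card: "card ?others = n - 1"
    using \<open>j < n\<close> by simp
  have "(if j = 0 then 1 else 0) \<in> ?others"
    using \<open>2 \<le> n\<close> by auto
  then have "?others \<noteq> {}"
    by blast
  have "(\<Sum>i<n. f i) = f j + (\<Sum>i\<in>?others. f i)"
    using \<open>j < n\<close> by (simp add: sum.remove)
  then have "(\<Sum>i\<in>?others. f i) \<le> T - c"
    using sum \<open>c \<le> f j\<close> by linarith
  then obtain i where "i \<in> ?others" "f i \<le> (T - c) / real (n - 1)"
    using exists_le_average[of ?others f "T - c"] card \<open>?others \<noteq> {}\<close> by auto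
  then show ?thesis
    using \<open>2 \<le> n\<close> by (auto simp: of_nat_diff)
qed

lemma sum_measure_le_disjoint:
  assumes "finite I" "disjoint_family_on X I" "\<And>i. i \<in> I \<Longrightarrow> X i \<in> lmeasurable"
    and "(\<Union>i\<in>I. X i) \<subseteq> A" "A \<in> lmeasurable"
  shows "(\<Sum>i\<in>I. measure lebesgue (X i)) \<le> measure lebesgue A"
proof -
  have "(\<Sum>i\<in>I. measure lebesgue (X i)) = measure lebesgue (\<Union>i\<in>I. X i)"
    using assms(1-3) fmeasurableD2[OF assms(3)]
    by (intro measure_finite_Union[symmetric]) (auto simp: fmeasurableD)
  also have "\<dots> \<le> measure lebesgue A"
    using assms by (intro measure_mono_fmeasurable) auto
  finally show ?thesis .
qed

lemma allocation_fat_pieces_lmeasurable: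
  assumes "allocation C n (fat_pieces M) X" "C \<in> lmeasurable" "i < n"
  shows "X i \<in> lmeasurable"
proof -
  have "X i \<in> sets borel" "X i \<subseteq> C"
    using assms unfolding allocation_def fat_pieces_def by auto
  then show ?thesis
    using fmeasurableI2[OF \<open>C \<in> lmeasurable\<close>] sets_completionI_sets[of "X i" lborel] by simp
qed

lemma PropEF_le_Prop: "PropEF C n S \<le> Prop C n S"
  unfolding PropEF_def Prop_def
proof (rule Inf_mono)
  fix b assume "b \<in> {Sup {ereal (prop_ratio C n v X) | X. allocation C n S X} | v. \<forall>i<n. value_density C (v i)}"
  then obtain v where v: "\<forall>i<n. value_density C (v i)"
    and b: "b = Sup {ereal (prop_ratio C n v X) | X. allocation C n S X}"
    by blast
  have "Sup {ereal (prop_ratio C n v X) | X. allocation C n S X \<and> envy_free n S v X} \<le> b"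
    unfolding b by (rule Sup_subset_mono) blast
  then show "\<exists>a \<in> {Sup {ereal (prop_ratio C n v X) | X. allocation C n S X \<and> envy_free n S v X} | v.
      \<forall>i<n. value_density C (v i)}. a \<le> b"
    using v by blast
qed

lemma Prop_le_uniform_bound:
  assumes "\<forall>i<n. value_density C (v i)" and "\<And>X. allocation C n S X \<Longrightarrow> prop_ratio C n v X \<le> b"
  shows "Prop C n S \<le> ereal b"
proof -
  have "Prop C n S \<le> Sup {ereal (prop_ratio C n v X) | X. allocation C n S X}"
    unfolding Prop_def using assms(1) by (blast intro: Inf_lower)
  also have "\<dots> \<le> ereal b"
    using assms(2) by (auto intro: Sup_least)
  finally show ?thesis .
qed

lemma valm_const_one:
  assumes "X \<in> lmeasurable"
  shows "valm (\<lambda>x. 1) X = measure lebesgue X"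
  using set_integral_const[OF fmeasurableD[OF assms] fmeasurableD2[OF assms, folded infinity_ennreal_def],
      of "1 :: real"]
  by (simp add: valm_def)

lemma value_density_const_one:
  assumes "C \<in> lmeasurable" "0 < measure lebesgue C"
  shows "value_density C (\<lambda>x. 1)"
  using assms valm_const_one[OF assms(1)] fmeasurableD2[OF assms(1)]
  by (auto simp: value_density_def valm_def set_integrable_def less_top fmeasurableD)

section \<open>The corner cake\<close>

definition corner_cake :: "real \<Rightarrow> real \<Rightarrow> (real^'d::finite) set" where
  "corner_cake R e = cbox 0 One \<union> cbox ((R + 1 - e) *\<^sub>R One) ((R + 1) *\<^sub>R One)"

lemma unit_cube_disjoint_corner:
  assumes "e < R"
  shows "cbox 0 One \<inter> cbox ((R + 1 - e) *\<^sub>R One) ((R + 1) *\<^sub>R One) = ({} :: (real^'d::finite) set)"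
proof -
  have "x \<notin> cbox ((R + 1 - e) *\<^sub>R One) ((R + 1) *\<^sub>R One)" if "x \<in> cbox 0 One" for x :: "real^'d"
  proof
    assume "x \<in> cbox ((R + 1 - e) *\<^sub>R One) ((R + 1) *\<^sub>R One)"
    then have "R + 1 - e \<le> x $ undefined"
      by (simp add: mem_box_cart)
    moreover have "x $ undefined \<le> 1"
      using that by (simp add: mem_box_cart)
    ultimately show False
      using assms by simp
  qed
  then show ?thesis
    by blast
qed

lemma measure_corner_cake:
  assumes "0 < e" "e < R"
  shows "(corner_cake R e :: (real^'d::finite) set) \<in> lmeasurable"
    and "measure lebesgue (corner_cake R e :: (real^'d) set) = 1 + e ^ CARD('d)"
proof -
  let ?K = "cbox 0 One :: (real^'d) set" and ?P = "cbox ((R + 1 - e) *\<^sub>R One) ((R + 1) *\<^sub>R One) :: (real^'d) set"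
  show "(corner_cake R e :: (real^'d) set) \<in> lmeasurable"
    by (simp add: corner_cake_def fmeasurable.Un)
  have "measure lebesgue ?K = 1"
    using measure_cbox_scaleR_One[of 0 1, where 'n='d] by simp
  moreover have "measure lebesgue ?P = e ^ CARD('d)"
    using measure_cbox_scaleR_One[of "R + 1 - e" "R + 1", where 'n='d] \<open>0 < e\<close> by simp
  moreover have "measure lebesgue (?K \<union> ?P) = measure lebesgue ?K + measure lebesgue ?P"
    using measure_Un3[OF lmeasurable_cbox lmeasurable_cbox, of 0 One "(R + 1 - e) *\<^sub>R One" "(R + 1) *\<^sub>R One"]
      unit_cube_disjoint_corner[OF \<open>e < R\<close>, where 'd='d]
    by (metis measure_empty diff_zero)
  ultimately show "measure lebesgue (corner_cake R e :: (real^'d) set) = 1 + e ^ CARD('d)"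
    unfolding corner_cake_def by simp
qed

lemma fat_corner_cake:
  assumes "0 \<le> R" "e \<le> R + 1"
  shows "fat (R + 1) (corner_cake R e :: (real^'d::finite) set)"
proof -
  have "cube (\<lambda>x. x) 0 l = cbox 0 (l *\<^sub>R One)" for l :: real
    by (simp add: cube_def)
  moreover have "corner_cake R e \<subseteq> cbox 0 ((R + 1) *\<^sub>R (One :: real^'d))"
  proof
    fix x :: "real^'d" assume x: "x \<in> corner_cake R e"
    have "0 \<le> x $ i \<and> x $ i \<le> R + 1" for i
    proof -
      from x consider "0 \<le> x $ i" "x $ i \<le> 1" | "R + 1 - e \<le> x $ i" "x $ i \<le> R + 1"
        by (auto simp: corner_cake_def mem_box_cart)
      then show ?thesis
        using assms by cases linarith+
    qed
    then show "x \<in> cbox 0 ((R + 1) *\<^sub>R One)"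
      by (simp add: mem_box_cart)
  qed
  ultimately show ?thesis
    unfolding fat_def using assms orthogonal_transformation_id
    by (intro exI[of _ "\<lambda>x. x"] exI[of _ 0] exI[of _ 1] exI[of _ 0] exI[of _ "R + 1"])
      (auto simp: corner_cake_def id_def)
qed

lemma corner_cake_bridging_piece:
  fixes X :: "(real^'d::finite) set"
  assumes "fat M X" "X \<in> lmeasurable" and "X \<inter> cbox 0 One \<noteq> {}"
    and "X \<inter> cbox ((R + 1 - e) *\<^sub>R One) ((R + 1) *\<^sub>R One) \<noteq> {}" and "e < R"
  shows "((R - e) / M) ^ CARD('d) \<le> measure lebesgue X"
proof -
  obtain x y where "x \<in> X" "x \<in> cbox 0 One" "y \<in> X" "y \<in> cbox ((R + 1 - e) *\<^sub>R One) ((R + 1) *\<^sub>R One)"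
    using assms(3,4) by blast
  have "R - e \<le> \<bar>y $ i - x $ i\<bar>" for i
  proof -
    have "x $ i \<le> 1" "R + 1 - e \<le> y $ i"
      using \<open>x \<in> cbox 0 One\<close> \<open>y \<in> cbox _ _\<close> by (simp_all add: mem_box_cart)
    then show ?thesis
      by linarith
  qed
  then show ?thesis
    using fat_measure_ge[OF assms(1,2) \<open>x \<in> X\<close> \<open>y \<in> X\<close>] \<open>e < R\<close> by simp
qed

lemma corner_cake_small_piece:
  fixes X :: "nat \<Rightarrow> (real^'d::finite) set"
  assumes alloc: "allocation (corner_cake R e) n (fat_pieces M) X" and "2 \<le> n" "0 < e" "e < R"
  shows "\<exists>i<n. measure lebesgue (X i) \<le>
    max (e ^ CARD('d)) (max ((1 + e ^ CARD('d) - ((R - e) / M) ^ CARD('d)) / (real n - 1)) (1 / real n))"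
proof -
  define K where "K = (cbox 0 One :: (real^'d) set)"
  define P where "P = (cbox ((R + 1 - e) *\<^sub>R One) ((R + 1) *\<^sub>R One) :: (real^'d) set)"
  have cake: "corner_cake R e = K \<union> P"
    by (simp add: corner_cake_def K_def P_def)
  have cake_measure: "K \<union> P \<in> lmeasurable" "measure lebesgue (K \<union> P) = 1 + e ^ CARD('d)"
    using measure_corner_cake[OF \<open>0 < e\<close> \<open>e < R\<close>, where 'd='d] cake by auto
  have pieces: "X i \<in> lmeasurable" "X i \<subseteq> K \<union> P" "fat M (X i)" if "i < n" for i
    using allocation_fat_pieces_lmeasurable[OF alloc[unfolded cake] cake_measure(1) that] alloc that cake
    by (auto simp: allocation_def fat_pieces_def)
  have disjoint: "disjoint_family_on X {..<n}"
    using alloc by (auto simp: allocation_def disjoint_family_on_def)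
  have sum_le: "(\<Sum>i<n. measure lebesgue (X i)) \<le> measure lebesgue A"
    if "\<And>i. i < n \<Longrightarrow> X i \<subseteq> A" "A \<in> lmeasurable" for A
    using that pieces(1) by (intro sum_measure_le_disjoint[OF _ disjoint]) auto
  consider (in_corner) i where "i < n" "X i \<subseteq> P"
    | (bridge) j where "j < n" "X j \<inter> K \<noteq> {}" "X j \<inter> P \<noteq> {}"
    | (in_unit) "\<And>i. i < n \<Longrightarrow> X i \<subseteq> K"
    using pieces(2) by blast
  then show ?thesis
  proof cases
    case in_corner
    have "measure lebesgue (X i) \<le> measure lebesgue P"
      using in_corner pieces(1) by (intro measure_mono_fmeasurable) (auto simp: P_def fmeasurableD)
    also have "\<dots> = e ^ CARD('d)"
      using measure_cbox_scaleR_One[of "R + 1 - e" "R + 1", where 'n='d] \<open>0 < e\<close> by (simp add: P_def)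
    finally show ?thesis
      using in_corner by auto
  next
    case bridge
    then have "((R - e) / M) ^ CARD('d) \<le> measure lebesgue (X j)"
      using corner_cake_bridging_piece[OF pieces(3,1)[OF \<open>j < n\<close>] _ _ \<open>e < R\<close>]
      unfolding K_def P_def by blast
    moreover have "(\<Sum>i<n. measure lebesgue (X i)) \<le> 1 + e ^ CARD('d)"
      using sum_le[OF pieces(2) cake_measure(1)] cake_measure(2) by simp
    ultimately show ?thesis
      using exists_le_average_of_large_term[OF _ \<open>j < n\<close> _ \<open>2 \<le> n\<close>] by fastforce
  next
    case in_unit
    then have "(\<Sum>i<n. measure lebesgue (X i)) \<le> 1"
      using sum_le[of K] measure_cbox_scaleR_One[of 0 1, where 'n='d] by (simp add: K_def)
    then obtain i where "i < n" "measure lebesgue (X i) \<le> 1 / real n"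
      using exists_le_average[of "{..<n}" "\<lambda>i. measure lebesgue (X i)" 1] \<open>2 \<le> n\<close>
      by (auto simp: lessThan_empty_iff)
    then show ?thesis
      by auto
  qed
qed

lemma Prop_corner_cake_less:
  fixes R e M :: real
  defines "T \<equiv> 1 + e ^ CARD('d)"
  assumes "2 \<le> n" "0 < e" "e < R"
    and bound: "max (e ^ CARD('d)) (max ((T - ((R - e) / M) ^ CARD('d)) / (real n - 1)) (1 / real n)) < T / real n"
      (is "?W < _")
  shows "Prop (corner_cake R e :: (real^'d::finite) set) n (fat_pieces M) < ereal (1 / real n)"
proof -
  let ?C = "corner_cake R e :: (real^'d) set"
  have C: "?C \<in> lmeasurable" "measure lebesgue ?C = T" "0 < T"
    using measure_corner_cake[OF \<open>0 < e\<close> \<open>e < R\<close>, where 'd='d] \<open>0 < e\<close> by (simp_all add: T_def add_pos_nonneg)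
  have "Prop ?C n (fat_pieces M) \<le> ereal (?W / T)"
  proof (rule Prop_le_uniform_bound[where v = "\<lambda>i x. 1"])
    show "\<forall>i<n. value_density ?C (\<lambda>x. 1)"
      using value_density_const_one[OF C(1)] C(2,3) by simp
    fix X assume alloc: "allocation ?C n (fat_pieces M) X"
    obtain i where "i < n" "measure lebesgue (X i) \<le> ?W"
      using corner_cake_small_piece[OF alloc \<open>2 \<le> n\<close> \<open>0 < e\<close> \<open>e < R\<close>] unfolding T_def by blast
    have "prop_ratio ?C n (\<lambda>i x. 1) X \<le> valm (\<lambda>x. 1) (X i) / valm (\<lambda>x. 1) ?C"
      unfolding prop_ratio_def using \<open>i < n\<close> by (intro Min_le) auto
    also have "\<dots> = measure lebesgue (X i) / T"
      using valm_const_one[OF allocation_fat_pieces_lmeasurable[OF alloc C(1) \<open>i < n\<close>]]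
        valm_const_one[OF C(1)] C(2) by simp
    also have "\<dots> \<le> ?W / T"
      using \<open>measure lebesgue (X i) \<le> ?W\<close> C(3) by (simp add: divide_right_mono)
    finally show "prop_ratio ?C n (\<lambda>i x. 1) X \<le> ?W / T" .
  qed
  also have "ereal (?W / T) < ereal (1 / real n)"
    using bound C(3) \<open>2 \<le> n\<close> by (simp add: divide_less_eq field_simps)
  finally show ?thesis .
qed

lemma corner_size_bounds:
  fixes n d :: nat and e :: real
  assumes n: "2 \<le> n" and d: "1 \<le> d" and e: "e = 1 / (2 * real n * real d)"
  shows "0 < e" "4 * e \<le> 1" "real n * real d * e = 1 / 2" "(real n - 1) * e ^ d < 1 / 2"
proof -
  show "0 < e"
    using n d e by simp
  show nde: "real n * real d * e = 1 / 2"
    using n d e by (simp add: field_simps)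
  have "2 \<le> real n * real d"
    using mult_mono[of 2 "real n" 1 "real d"] n d by simp
  then have "2 * e \<le> real n * real d * e"
    using \<open>0 < e\<close> by (intro mult_right_mono) auto
  then show "4 * e \<le> 1"
    using nde by simp
  then have "e ^ d \<le> e"
    using power_decreasing[of 1 d e] d \<open>0 < e\<close> by simp
  have "(real n - 1) * e ^ d \<le> (real n - 1) * e"
    using \<open>e ^ d \<le> e\<close> n by (intro mult_left_mono) auto
  also have "\<dots> < real n * e"
    using \<open>0 < e\<close> by (simp add: algebra_simps)
  also have "\<dots> \<le> real n * real d * e"
    using mult_left_mono[of 1 "real d" "real n * e"] d \<open>0 < e\<close> by (simp add: algebra_simps)
  finally show "(real n - 1) * e ^ d < 1 / 2"
    using nde by simp
qed

lemma corner_cake_numerics: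
  fixes n d :: nat and R m e :: real
  assumes "2 \<le> n" "1 \<le> d" "1 \<le> R" "1 \<le> m" and m: "m \<le> (real n - 1) powr (1 / real d)"
    and e: "e = 1 / (2 * real n * real d)"
  shows "max (e ^ d) (max ((1 + e ^ d - ((R - e) / (m * R)) ^ d) / (real n - 1)) (1 / real n))
    < (1 + e ^ d) / real n"
proof -
  let ?T = "1 + e ^ d" and ?c = "((R - e) / (m * R)) ^ d"
  have n: "2 \<le> real n" and d: "1 \<le> real d"
    using assms by auto
  have "0 < e" and "4 * e \<le> 1" and nde: "real n * real d * e = 1 / 2"
    and small: "(real n - 1) * e ^ d < 1 / 2"
    using corner_size_bounds[OF \<open>2 \<le> n\<close> \<open>1 \<le> d\<close> e] by auto
  have "m ^ d \<le> ((real n - 1) powr (1 / real d)) ^ d"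
    using \<open>1 \<le> m\<close> m by (intro power_mono) auto
  also have "\<dots> = real n - 1"
    using n d by (simp add: powr_realpow[symmetric] powr_powr)
  finally have "m ^ d \<le> real n - 1" .
  have "1 - real d * e \<le> 1 + real d * (- (e / R))"
    using \<open>0 < e\<close> \<open>1 \<le> R\<close> d by (simp add: field_simps mult_left_mono)
  also have "\<dots> \<le> (1 - e / R) ^ d"
    using Bernoulli_inequality[of "- (e / R)" d] \<open>4 * e \<le> 1\<close> \<open>1 \<le> R\<close> \<open>0 < e\<close>
    by (simp add: field_simps)
  finally have bernoulli: "1 - real d * e \<le> (1 - e / R) ^ d" .
  have "0 \<le> (1 - e / R) ^ d"
    using \<open>4 * e \<le> 1\<close> \<open>1 \<le> R\<close> by (simp add: field_simps)
  have "?T / real n < (1 - real d * e) / (real n - 1)"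
    using small nde n by (simp add: field_simps)
  also have "\<dots> \<le> (1 - e / R) ^ d / m ^ d"
    using bernoulli \<open>m ^ d \<le> real n - 1\<close> \<open>1 \<le> m\<close> nde n \<open>0 \<le> (1 - e / R) ^ d\<close>
    by (intro frac_le) (auto simp: field_simps)
  also have "\<dots> = ?c"
    using \<open>1 \<le> R\<close> \<open>1 \<le> m\<close> by (simp add: field_simps flip: power_divide)
  finally have "?T / real n < ?c" .
  then have "(?T - ?c) / (real n - 1) < (?T - ?T / real n) / (real n - 1)"
    using n by (intro divide_strict_right_mono) auto
  also have "\<dots> = ?T / real n"
    using n by (simp add: field_simps)
  finally have "(?T - ?c) / (real n - 1) < ?T / real n" .
  moreover have "e ^ d < ?T / real n" "1 / real n < ?T / real n"
    using small n \<open>0 < e\<close> by (simp_all add: field_simps)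
  ultimately show ?thesis
    by simp
qed

theorem mainTheorem15:
  fixes R :: real and n :: nat
  assumes "CARD('d::finite) \<ge> 2" and "n \<ge> 2" and "R \<ge> 1"
  shows "\<exists>C :: (real^'d) set. C \<in> sets borel \<and> fat (R + 1) C \<and>
    (\<forall>m'::real. 1 \<le> m' \<and> m' \<le> (real n - 1) powr (1 / real CARD('d)) \<longrightarrow>
       PropEF C n (fat_pieces (m' * R)) \<le> Prop C n (fat_pieces (m' * R)) \<and>
       Prop C n (fat_pieces (m' * R)) < ereal (1 / real n))"
proof -
  define e where "e = 1 / (2 * real n * real CARD('d))"
  have "4 \<le> real n * real CARD('d)"
    using mult_mono[of 2 "real n" 2 "real CARD('d)"] assms by simp
  then have "0 < e" "e < 1"
    by (simp_all add: e_def mult.assoc)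
  then have "e < R"
    using \<open>R \<ge> 1\<close> by simp
  show ?thesis
  proof (intro exI[of _ "corner_cake R e"] conjI allI impI)
    show "(corner_cake R e :: (real^'d) set) \<in> sets borel"
      by (simp add: corner_cake_def)
    show "fat (R + 1) (corner_cake R e :: (real^'d) set)"
      using \<open>0 < e\<close> \<open>e < R\<close> assms by (intro fat_corner_cake) auto
    fix m' :: real assume "1 \<le> m' \<and> m' \<le> (real n - 1) powr (1 / real CARD('d))"
    then show "Prop (corner_cake R e :: (real^'d) set) n (fat_pieces (m' * R)) < ereal (1 / real n)"
      using corner_cake_numerics[of n "CARD('d)" R m' e] assms e_def \<open>0 < e\<close> \<open>e < R\<close>
      by (intro Prop_corner_cake_less[where 'd='d]) auto
  qed (rule PropEF_le_Prop)
qed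

end
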